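(* For all coinitial CCSK transitions $t,u$: $t,u$ are directly key independent if and only if $t\mathrel\iota u$.
   Context: Names $\mathsf N$ with bijection $\overline\cdot$ onto disjoint co-names; $\mathsf L=\mathsf N\cup\overline{\mathsf N}\cup\{\tau\}$ ($\alpha,\beta$ over $\mathsf L$, $\lambda$ over $\mathsf L\setminus\{\tau\}$); keys $\mathsf K$ denumerable. CCSK processes $X::=\mathbf 0\mid\alpha.X\mid X\backslash\lambda\mid X+Y\mid X|Y\mid\alpha[k].X$; $\mathrm{keys}(X)$ keys in $X$. Directions $D\in\{\mathrm L,\mathrm R\}$, $\bar{\mathrm L}=\mathrm R$, $\bar{\mathrm R}=\mathrm L$. Proof keyed labels $\theta::=\upsilon\alpha[k]\mid\upsilon\langle\upsilon_1\lambda[k],\upsilon_2\overline\lambda[k]\rangle$ ($\upsilon,\upsilon_i\in\{|_{\mathrm L},|_{\mathrm R},+_{\mathrm L},+_{\mathrm R}\}^*$), $\ell(\upsilon\alpha[k])=\alpha$, $\ell(\upsilon\langle\cdots\rangle)=\tau$, $\mathrm{key}(\theta)=k$. Forward CCSK$^{\mathrm P}$ transitions: least relation closed under (act) $\alpha.X\xrightarrow{\alpha[k]}\alpha[k].X$ if $\mathrm{keys}(X)=\emptyset$; (pre) $X\xrightarrow\theta X',\mathrm{key}(\theta)\ne k\Rightarrow\alpha[k].X\xrightarrow\theta\alpha[k].X'$; (res) $X\xrightarrow\theta X',\ell(\theta)\notin\{\lambda,\overline\lambda\}\Rightarrow X\backslash\lambda\xrightarrow\theta X'\backslash\lambda$;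 (par) $X\xrightarrow\theta X',\mathrm{key}(\theta)\notin\mathrm{keys}(Y)\Rightarrow X|Y\xrightarrow{|_{\mathrm L}\theta}X'|Y$, $Y|X\xrightarrow{|_{\mathrm R}\theta}Y|X'$; (syn) $X\xrightarrow{\upsilon_1\lambda[k]}X',Y\xrightarrow{\upsilon_2\overline\lambda[k]}Y'\Rightarrow X|Y\xrightarrow{\langle\upsilon_1\lambda[k],\upsilon_2\overline\lambda[k]\rangle}X'|Y'$; (sum) $X\xrightarrow\theta X',\mathrm{keys}(Y)=\emptyset\Rightarrow X+Y\xrightarrow{+_{\mathrm L}\theta}X'+Y$, $Y+X\xrightarrow{+_{\mathrm R}\theta}Y+X'$. Backward transitions are converses. Only processes reachable by a path from a key-free process are considered. Transitions are connected if there is a path from the source of one to the target of the other. CCSK: same processes; for each CCSK$^{\mathrm P}$ transition with label $\theta$ a CCSK transition (same direction, same processes) with label $\ell(\theta)[\mathrm{key}(\theta)]$ (a bijection; $\hat t$ denotes the CCSK$^{\mathrm P}$ transition corresponding to $t$). Independence $\iota$ on proof labels: least relation closed under (C1) $+_D\theta\mathrel\iota+_D\theta'$ if $\theta\mathrel\iota\theta'$; (P1) $|_D\theta\mathrel\iota|_D\theta'$ if $\theta\mathrel\iota\theta'$; (P2$_k$) $|_D\theta\mathrel\iota|_{\bar D}\theta'$ if $\mathrm{key}(\theta)\ne\mathrm{key}(\theta')$; (S1) $|_D\theta\mathrel\iota\langle\theta_{\mathrm L},\theta_{\mathrm R}\rangle$ if $\theta\mathrel\iota\theta_D$; (S2)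 $\langle\theta_{\mathrm L},\theta_{\mathrm R}\rangle\mathrel\iota|_D\theta$ if $\theta_D\mathrel\iota\theta$; (S3) $\langle\theta_1,\theta_2\rangle\mathrel\iota\langle\theta_1',\theta_2'\rangle$ if $\theta_1\mathrel\iota\theta_1'$ and $\theta_2\mathrel\iota\theta_2'$. For CCSK transitions $t\mathrel\iota u$ iff $t,u$ are connected and the labels of $\hat t,\hat u$ satisfy $\iota$. CCSK transitions $t:P\to Q$ with label $\alpha[m]$ and $u:P\to R$ with label $\beta[n]$ (each forward or backward) are directly key independent if $m\ne n$ and there are transitions $u':Q\to S$ with label $\beta[n]$ and the direction of $u$, and $t':R\to S$ with label $\alpha[m]$ and the direction of $t$. *)

theory Defs
  imports Main
begin

text \<open>Names are an arbitrary type 'n; visible labels are names or co-names.\<close>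
datatype 'n vis = VN 'n | VC 'n

fun cobar :: "'n vis \<Rightarrow> 'n vis" where
  "cobar (VN a) = VC a"
| "cobar (VC a) = VN a"

datatype 'n act = Vis "'n vis" | Tau

type_synonym key = nat

datatype 'n proc =
    P0
  | Pre "'n act" "'n proc"              (* alpha.X *)
  | Rs "'n proc" "'n vis"               (* X \ lambda *)
  | Plus "'n proc" "'n proc"
  | Pa "'n proc" "'n proc"              (* X | Y *)
  | KPre "'n act" key "'n proc"         (* alpha[k].X *)

fun keys :: "'n proc \<Rightarrow> key set" where
  "keys P0 = {}"
| "keys (Pre a X) = keys X"
| "keys (Rs X l) = keys X"
| "keys (Plus X Y) = keys X \<union> keys Y"
| "keys (Pa X Y) = keys X \<union> keys Y"
| "keys (KPre a k X) = insert k (keys X)"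

datatype dir = DL | DR

fun flip :: "dir \<Rightarrow> dir" where
  "flip DL = DR" | "flip DR = DL"

text \<open>TPar D is the symbol |_D, TSum D is +_D.\<close>
datatype tag = TPar dir | TSum dir

text \<open>PA u a k  is  u a[k];
      PS u u1 l u2 k  is  u <u1 l[k], u2 (cobar l)[k]>.\<close>
datatype 'n plab =
    PA "tag list" "'n act" key
  | PS "tag list" "tag list" "'n vis" "tag list" key

fun pre :: "tag \<Rightarrow> 'n plab \<Rightarrow> 'n plab" where
  "pre g (PA u a k) = PA (g # u) a k"
| "pre g (PS u u1 l u2 k) = PS (g # u) u1 l u2 k"

fun lab :: "'n plab \<Rightarrow> 'n act" where
  "lab (PA u a k) = a"
| "lab (PS u u1 l u2 k) = Tau"

fun pkey :: "'n plab \<Rightarrow> key" where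
  "pkey (PA u a k) = k"
| "pkey (PS u u1 l u2 k) = k"

text \<open>Components theta_L and theta_R of a synchronisation <u1 l[k], u2 (cobar l)[k]>.\<close>
fun comp :: "dir \<Rightarrow> tag list \<Rightarrow> 'n vis \<Rightarrow> tag list \<Rightarrow> key \<Rightarrow> 'n plab" where
  "comp DL u1 l u2 k = PA u1 (Vis l) k"
| "comp DR u1 l u2 k = PA u2 (Vis (cobar l)) k"

inductive ftrans :: "'n proc \<Rightarrow> 'n plab \<Rightarrow> 'n proc \<Rightarrow> bool" where
  act: "keys X = {} \<Longrightarrow> ftrans (Pre a X) (PA [] a k) (KPre a k X)"
| pref: "ftrans X \<theta> X' \<Longrightarrow> pkey \<theta> \<noteq> k \<Longrightarrow> ftrans (KPre a k X) \<theta> (KPre a k X')"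
| res: "ftrans X \<theta> X' \<Longrightarrow> lab \<theta> \<notin> {Vis l, Vis (cobar l)} \<Longrightarrow> ftrans (Rs X l) \<theta> (Rs X' l)"
| parL: "ftrans X \<theta> X' \<Longrightarrow> pkey \<theta> \<notin> keys Y \<Longrightarrow> ftrans (Pa X Y) (pre (TPar DL) \<theta>) (Pa X' Y)"
| parR: "ftrans X \<theta> X' \<Longrightarrow> pkey \<theta> \<notin> keys Y \<Longrightarrow> ftrans (Pa Y X) (pre (TPar DR) \<theta>) (Pa Y X')"
| syn: "ftrans X (PA u1 (Vis l) k) X' \<Longrightarrow> ftrans Y (PA u2 (Vis (cobar l)) k) Y'
        \<Longrightarrow> ftrans (Pa X Y) (PS [] u1 l u2 k) (Pa X' Y')"
| sumL: "ftrans X \<theta> X' \<Longrightarrow> keys Y = {} \<Longrightarrow> ftrans (Plus X Y) (pre (TSum DL) \<theta>) (Plus X' Y)"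
| sumR: "ftrans X \<theta> X' \<Longrightarrow> keys Y = {} \<Longrightarrow> ftrans (Plus Y X) (pre (TSum DR) \<theta>) (Plus Y X')"

definition step :: "'n proc \<Rightarrow> 'n proc \<Rightarrow> bool" where
  "step P Q \<longleftrightarrow> (\<exists>\<theta>. ftrans P \<theta> Q \<or> ftrans Q \<theta> P)"

definition reachable :: "'n proc \<Rightarrow> bool" where
  "reachable P \<longleftrightarrow> (\<exists>P0'. keys P0' = {} \<and> step\<^sup>*\<^sup>* P0' P)"

inductive iota :: "'n plab \<Rightarrow> 'n plab \<Rightarrow> bool" where
  C1: "iota \<theta> \<theta>' \<Longrightarrow> iota (pre (TSum D) \<theta>) (pre (TSum D) \<theta>')"
| P1: "iota \<theta> \<theta>' \<Longrightarrow> iota (pre (TPar D) \<theta>) (pre (TPar D) \<theta>')"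
| P2: "pkey \<theta> \<noteq> pkey \<theta>' \<Longrightarrow> iota (pre (TPar D) \<theta>) (pre (TPar (flip D)) \<theta>')"
| S1: "iota \<theta> (comp D u1 l u2 k) \<Longrightarrow> iota (pre (TPar D) \<theta>) (PS [] u1 l u2 k)"
| S2: "iota (comp D u1 l u2 k) \<theta> \<Longrightarrow> iota (PS [] u1 l u2 k) (pre (TPar D) \<theta>)"
| S3: "iota (PA u1 (Vis l) k) (PA u1' (Vis l') k') \<Longrightarrow>
       iota (PA u2 (Vis (cobar l)) k) (PA u2' (Vis (cobar l')) k') \<Longrightarrow>
       iota (PS [] u1 l u2 k) (PS [] u1' l' u2' k')"

datatype direction = Fw | Bw

datatype 'n ctrans = CT (src: "'n proc") (dirn: direction) (clab: "'n act") (ckey: key) (tgt: "'n proc")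

text \<open>t-hat: a CCSK^P transition (with label theta) corresponding to the CCSK transition t.\<close>
definition hat :: "'n ctrans \<Rightarrow> 'n plab \<Rightarrow> bool" where
  "hat t \<theta> \<longleftrightarrow> lab \<theta> = clab t \<and> pkey \<theta> = ckey t \<and>
     (if dirn t = Fw then ftrans (src t) \<theta> (tgt t) else ftrans (tgt t) \<theta> (src t))"

definition is_ctrans :: "'n ctrans \<Rightarrow> bool" where
  "is_ctrans t \<longleftrightarrow> reachable (src t) \<and> (\<exists>\<theta>. hat t \<theta>)"

definition connected :: "'n ctrans \<Rightarrow> 'n ctrans \<Rightarrow> bool" where
  "connected t u \<longleftrightarrow> step\<^sup>*\<^sup>* (src t) (tgt u) \<or> step\<^sup>*\<^sup>* (src u) (tgt t)"

definition ctrans_indep :: "'n ctrans \<Rightarrow> 'n ctrans \<Rightarrow> bool" where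
  "ctrans_indep t u \<longleftrightarrow> connected t u \<and> (\<exists>\<theta> \<theta>'. hat t \<theta> \<and> hat u \<theta>' \<and> iota \<theta> \<theta>')"

definition coinitial :: "'n ctrans \<Rightarrow> 'n ctrans \<Rightarrow> bool" where
  "coinitial t u \<longleftrightarrow> src t = src u"

definition direct_key_indep :: "'n ctrans \<Rightarrow> 'n ctrans \<Rightarrow> bool" where
  "direct_key_indep t u \<longleftrightarrow> ckey t \<noteq> ckey u \<and>
     (\<exists>S. is_ctrans (CT (tgt t) (dirn u) (clab u) (ckey u) S) \<and>
          is_ctrans (CT (tgt u) (dirn t) (clab t) (ckey t) S))"

end

theory Submission
  imports Defs
begin

text \<open>Both directions are proved by structural induction on the common source, with forward and
  backward steps treated uniformly. Independent proof labels act in different parallel components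
  or on independent sub-labels of the same component, so each transition can be replayed after the
  other; the key side conditions survive because the two keys differ. Conversely, consider a square
  closed by steps carrying the swapped keys. Whether a key \<open>k\<close> occurs changes exactly at the
  steps with key \<open>k\<close>, so a component of a sum or parallel composition moved by one transition
  is moved again on the opposite side of the square. The square thus splits into squares of
  components, whose labels are independent by induction.\<close>

lemma pkey_pre [simp]: "pkey (pre g \<theta>) = pkey \<theta>"
  by (cases \<theta>) auto

lemma pre_eq_pre_iff [simp]: "pre g \<theta> = pre g' \<theta>' \<longleftrightarrow> g = g' \<and> \<theta> = \<theta>'"
  by (cases \<theta>; cases \<theta>') auto

lemma pre_neq_Nil [simp]:
  "pre g \<theta> \<noteq> PA [] a k" "PA [] a k \<noteq> pre g \<theta>"
  "pre g \<theta> \<noteq> PS [] u1 l u2 k" "PS [] u1 l u2 k \<noteq> pre g \<theta>"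
  by (cases \<theta>; simp)+

lemma pkey_comp [simp]: "pkey (comp D u1 l u2 k) = k"
  by (cases D) auto

fun dtrans :: "direction \<Rightarrow> 'n proc \<Rightarrow> 'n plab \<Rightarrow> 'n proc \<Rightarrow> bool" where
  "dtrans Fw P \<theta> Q \<longleftrightarrow> ftrans P \<theta> Q"
| "dtrans Bw P \<theta> Q \<longleftrightarrow> ftrans Q \<theta> P"

lemma ftrans_keys: "ftrans P \<theta> Q \<Longrightarrow> pkey \<theta> \<notin> keys P \<and> keys Q = insert (pkey \<theta>) (keys P)"
  by (induction rule: ftrans.induct) auto

lemma dtrans_keys_change: "dtrans d P \<theta> Q \<Longrightarrow> (x \<in> keys P) \<noteq> (x \<in> keys Q) \<longleftrightarrow> x = pkey \<theta>"
  by (cases d) (auto dest!: ftrans_keys)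

lemma dtrans_keys_subset: "dtrans d P \<theta> Q \<Longrightarrow> keys Q \<subseteq> insert (pkey \<theta>) (keys P)"
  using dtrans_keys_change by blast

lemma dtrans_P0 [simp]: "\<not> dtrans d P0 \<theta> Q"
  by (cases d) (auto elim: ftrans.cases)

lemma dtrans_PreD:
  "dtrans d (Pre a X) \<theta> Q \<Longrightarrow> \<theta> = PA [] a (pkey \<theta>) \<and> Q = KPre a (pkey \<theta>) X"
  by (cases d) (auto elim: ftrans.cases)

lemma dtrans_KPreE:
  assumes "dtrans d (KPre a k X) \<theta> Q"
  obtains (inner) X' where "Q = KPre a k X'" "dtrans d X \<theta> X'" "pkey \<theta> \<noteq> k"
    | (undo) "\<theta> = PA [] a k" "Q = Pre a X"
  using assms by (cases d) (auto elim: ftrans.cases)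

lemma dtrans_RsE:
  assumes "dtrans d (Rs X l) \<theta> Q"
  obtains X' where "Q = Rs X' l" "dtrans d X \<theta> X'" "lab \<theta> \<notin> {Vis l, Vis (cobar l)}"
  using assms by (cases d) (auto elim: ftrans.cases)

lemma dtrans_PlusE:
  assumes "dtrans d (Plus X Y) \<theta> Q"
  obtains (left) \<phi> X' where "\<theta> = pre (TSum DL) \<phi>" "Q = Plus X' Y" "dtrans d X \<phi> X'" "keys Y = {}"
    | (right) \<phi> Y' where "\<theta> = pre (TSum DR) \<phi>" "Q = Plus X Y'" "dtrans d Y \<phi> Y'" "keys X = {}"
  using assms by (cases d) (auto elim: ftrans.cases)

lemma dtrans_PaE:
  assumes "dtrans d (Pa X Y) \<theta> Q"
  obtains (left) \<phi> X' where "\<theta> = pre (TPar DL) \<phi>" "Q = Pa X' Y" "dtrans d X \<phi> X'" "pkey \<phi> \<notin> keys Y"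
    | (right) \<phi> Y' where "\<theta> = pre (TPar DR) \<phi>" "Q = Pa X Y'" "dtrans d Y \<phi> Y'" "pkey \<phi> \<notin> keys X"
    | (sync) u1 l u2 k X' Y' where "\<theta> = PS [] u1 l u2 k" "Q = Pa X' Y'"
        "dtrans d X (PA u1 (Vis l) k) X'" "dtrans d Y (PA u2 (Vis (cobar l)) k) Y'"
  using assms by (cases d) (auto elim: ftrans.cases)

lemma dtrans_pref: "dtrans d X \<theta> X' \<Longrightarrow> pkey \<theta> \<noteq> k \<Longrightarrow> dtrans d (KPre a k X) \<theta> (KPre a k X')"
  by (cases d) (auto intro: ftrans.intros)

lemma dtrans_res:
  "dtrans d X \<theta> X' \<Longrightarrow> lab \<theta> \<notin> {Vis l, Vis (cobar l)} \<Longrightarrow> dtrans d (Rs X l) \<theta> (Rs X' l)"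
  by (cases d) (auto intro: ftrans.intros)

lemma dtrans_sumL:
  "dtrans d X \<theta> X' \<Longrightarrow> keys Y = {} \<Longrightarrow> dtrans d (Plus X Y) (pre (TSum DL) \<theta>) (Plus X' Y)"
  by (cases d) (auto intro: ftrans.intros)

lemma dtrans_sumR:
  "dtrans d Y \<theta> Y' \<Longrightarrow> keys X = {} \<Longrightarrow> dtrans d (Plus X Y) (pre (TSum DR) \<theta>) (Plus X Y')"
  by (cases d) (auto intro: ftrans.intros)

lemma dtrans_parL:
  "dtrans d X \<theta> X' \<Longrightarrow> pkey \<theta> \<notin> keys Y \<Longrightarrow> dtrans d (Pa X Y) (pre (TPar DL) \<theta>) (Pa X' Y)"
  by (cases d) (auto intro: ftrans.intros)

lemma dtrans_parR:
  "dtrans d Y \<theta> Y' \<Longrightarrow> pkey \<theta> \<notin> keys X \<Longrightarrow> dtrans d (Pa X Y) (pre (TPar DR) \<theta>) (Pa X Y')"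
  by (cases d) (auto intro: ftrans.intros)

lemma dtrans_syn:
  "dtrans d X (PA u1 (Vis l) k) X' \<Longrightarrow> dtrans d Y (PA u2 (Vis (cobar l)) k) Y' \<Longrightarrow>
   dtrans d (Pa X Y) (PS [] u1 l u2 k) (Pa X' Y')"
  by (cases d) (auto intro: ftrans.intros)

definition key_step :: "'n proc \<Rightarrow> key \<Rightarrow> 'n proc \<Rightarrow> bool" where
  "key_step P k Q \<longleftrightarrow> (\<exists>d \<theta>. pkey \<theta> = k \<and> dtrans d P \<theta> Q)"

definition maybe_key_step :: "bool \<Rightarrow> 'n proc \<Rightarrow> key \<Rightarrow> 'n proc \<Rightarrow> bool" where
  "maybe_key_step b P k Q \<longleftrightarrow> (if b then key_step P k Q else Q = P)"

lemma key_stepI: "dtrans d P \<theta> Q \<Longrightarrow> key_step P (pkey \<theta>) Q"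
  unfolding key_step_def by blast

lemma key_step_keys_change: "key_step P k Q \<Longrightarrow> (x \<in> keys P) \<noteq> (x \<in> keys Q) \<longleftrightarrow> x = k"
  unfolding key_step_def using dtrans_keys_change by blast

lemma maybe_key_step_key_change:
  "maybe_key_step b P k Q \<Longrightarrow> b \<longleftrightarrow> (k \<in> keys P) \<noteq> (k \<in> keys Q)"
  unfolding maybe_key_step_def using key_step_keys_change by (cases b) auto

lemma maybe_key_step_other_keys:
  "maybe_key_step b P k Q \<Longrightarrow> x \<noteq> k \<Longrightarrow> x \<in> keys P \<longleftrightarrow> x \<in> keys Q"
  unfolding maybe_key_step_def using key_step_keys_change by (cases b) auto

lemma maybe_key_step_square:
  assumes "maybe_key_step a X k X1" "maybe_key_step b X1 k' S"
    and "maybe_key_step c X k' X2" "maybe_key_step e X2 k S" and "k \<noteq> k'"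
  shows "e = a \<and> b = c"
proof -
  have "e = a"
    using maybe_key_step_key_change[OF assms(1)] maybe_key_step_other_keys[OF assms(2), of k]
      maybe_key_step_other_keys[OF assms(3), of k] maybe_key_step_key_change[OF assms(4)] assms(5)
    by auto
  moreover have "b = c"
    using maybe_key_step_other_keys[OF assms(1), of k'] maybe_key_step_key_change[OF assms(2)]
      maybe_key_step_key_change[OF assms(3)] maybe_key_step_other_keys[OF assms(4), of k'] assms(5)
    by auto
  ultimately show ?thesis ..
qed

lemma key_step_PreD: "key_step (Pre a X) k Q \<Longrightarrow> Q = KPre a k X"
  unfolding key_step_def by (auto dest: dtrans_PreD)

lemma key_step_KPreE:
  assumes "key_step (KPre a k X) k' Q"
  obtains (inner) X' where "Q = KPre a k X'" "key_step X k' X'" "k' \<noteq> k"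
    | (undo) "k' = k" "Q = Pre a X"
proof -
  from assms obtain d \<theta> where "dtrans d (KPre a k X) \<theta> Q" "k' = pkey \<theta>"
    unfolding key_step_def by blast
  then show thesis
    by (cases rule: dtrans_KPreE) (auto intro: that key_stepI)
qed

lemma key_step_RsE:
  assumes "key_step (Rs X l) k Q"
  obtains X' where "Q = Rs X' l" "key_step X k X'"
proof -
  from assms obtain d \<theta> where "dtrans d (Rs X l) \<theta> Q" "k = pkey \<theta>"
    unfolding key_step_def by blast
  then show thesis
    by (cases rule: dtrans_RsE) (auto intro: that key_stepI)
qed

lemma key_step_PlusE:
  assumes "key_step (Plus X Y) k Q"
  obtains (left) X' where "Q = Plus X' Y" "key_step X k X'" "keys Y = {}"
    | (right) Y' where "Q = Plus X Y'" "key_step Y k Y'" "keys X = {}"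
proof -
  from assms obtain d \<theta> where "dtrans d (Plus X Y) \<theta> Q" "k = pkey \<theta>"
    unfolding key_step_def by blast
  then show thesis
    by (cases rule: dtrans_PlusE) (auto intro: that key_stepI)
qed

lemma key_step_Plus_components:
  assumes "key_step (Plus X Y) k Q"
  obtains X' Y' b c where "Q = Plus X' Y'" "maybe_key_step b X k X'" "maybe_key_step c Y k Y'"
  using assms
  by (cases rule: key_step_PlusE)
    (auto simp: maybe_key_step_def intro: that[of _ _ True False] that[of _ _ False True])

lemma key_step_Pa_components:
  assumes "key_step (Pa X Y) k Q"
  obtains X' Y' b c where "Q = Pa X' Y'" "maybe_key_step b X k X'" "maybe_key_step c Y k Y'"
proof -
  from assms obtain d \<theta> where t: "dtrans d (Pa X Y) \<theta> Q" and k: "k = pkey \<theta>"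
    unfolding key_step_def by blast
  from t show thesis
  proof (cases rule: dtrans_PaE)
    case (left \<phi> X')
    then show thesis using k that[of X' Y True False] by (auto simp: maybe_key_step_def key_stepI)
  next
    case (right \<phi> Y')
    then show thesis using k that[of X Y' False True] by (auto simp: maybe_key_step_def key_stepI)
  next
    case (sync u1 l u2 k' X' Y')
    then show thesis using k that[of X' Y' True True] key_stepI by (force simp: maybe_key_step_def)
  qed
qed

lemma iota_pkey_neq: "iota \<theta> \<theta>' \<Longrightarrow> pkey \<theta> \<noteq> pkey \<theta>'"
  by (induction rule: iota.induct) auto

lemma not_iota_PA_Nil: "\<not> iota (PA [] a k) \<theta>" "\<not> iota \<theta> (PA [] a k)"
  by (auto elim: iota.cases)

lemma iota_TSum_iff [simp]:
  "iota (pre (TSum D) \<theta>) (pre (TSum D') \<theta>') \<longleftrightarrow> D = D' \<and> iota \<theta> \<theta>'"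
  by (auto elim: iota.cases intro: iota.C1)

fun par_proj :: "dir \<Rightarrow> 'n plab \<Rightarrow> 'n plab option" where
  "par_proj D (PA (TPar D' # u) a k) = (if D' = D then Some (PA u a k) else None)"
| "par_proj D (PS (TPar D' # u) u1 l u2 k) = (if D' = D then Some (PS u u1 l u2 k) else None)"
| "par_proj D (PS [] u1 l u2 k) = Some (comp D u1 l u2 k)"
| "par_proj D \<theta> = None"

lemma par_proj_pre [simp]: "par_proj D (pre g \<theta>) = (if g = TPar D then Some \<theta> else None)"
  by (cases \<theta>; cases g) auto

lemma pkey_par_proj: "par_proj D \<theta> = Some \<phi> \<Longrightarrow> pkey \<phi> = pkey \<theta>"
  by (induction D \<theta> rule: par_proj.induct) (auto split: if_splits)

lemma par_proj_SomeE:
  assumes "par_proj D \<theta> = Some \<phi>"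
  obtains (par) "\<theta> = pre (TPar D) \<phi>"
    | (sync) u1 l u2 k where "\<theta> = PS [] u1 l u2 k" "\<phi> = comp D u1 l u2 k"
  using assms by (induction D \<theta> rule: par_proj.induct) (auto split: if_splits)

lemma iota_par_proj:
  "iota \<theta> \<theta>' \<Longrightarrow> par_proj D \<theta> = Some \<phi> \<Longrightarrow> par_proj D \<theta>' = Some \<phi>' \<Longrightarrow> iota \<phi> \<phi>'"
  by (erule iota.cases; cases D) (auto split: if_splits)

lemma iota_par_projI:
  assumes "\<exists>D. par_proj D \<theta> \<noteq> None" "\<exists>D. par_proj D \<theta>' \<noteq> None" "pkey \<theta> \<noteq> pkey \<theta>'"
    and "\<And>D \<phi> \<phi>'. par_proj D \<theta> = Some \<phi> \<Longrightarrow> par_proj D \<theta>' = Some \<phi>' \<Longrightarrow> iota \<phi> \<phi>'"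
  shows "iota \<theta> \<theta>'"
proof -
  obtain D1 D2 \<phi>1 \<phi>2 where p1: "par_proj D1 \<theta> = Some \<phi>1" and p2: "par_proj D2 \<theta>' = Some \<phi>2"
    using assms(1,2) by blast
  from p1 show ?thesis
  proof (cases rule: par_proj_SomeE)
    case t: par
    from p2 show ?thesis
    proof (cases rule: par_proj_SomeE)
      case u: par
      have "iota (pre (TPar D1) \<phi>1) (pre (TPar (flip D1)) \<phi>2)" using t u assms(3)
        by (auto intro: iota.P2)
      then show ?thesis using t u assms(4) by (cases D1; cases D2) (auto intro: iota.P1)
    next
      case u: sync
      then show ?thesis using t assms(4)[of D1] by (auto intro: iota.S1)
    qed
  next
    case t: sync
    from p2 show ?thesis
    proof (cases rule: par_proj_SomeE)
      case u: par
      then show ?thesis using t assms(4)[of D2] by (auto intro: iota.S2)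
    next
      case u: sync
      then show ?thesis using t assms(4)[of DL] assms(4)[of DR] by (auto intro: iota.S3)
    qed
  qed
qed

definition dtrans_opt :: "direction \<Rightarrow> 'n proc \<Rightarrow> 'n plab option \<Rightarrow> 'n proc \<Rightarrow> bool" where
  "dtrans_opt d P c Q \<longleftrightarrow> (case c of None \<Rightarrow> Q = P | Some \<theta> \<Rightarrow> dtrans d P \<theta> Q)"

lemma dtrans_opt_simps [simp]:
  "dtrans_opt d P None Q \<longleftrightarrow> Q = P" "dtrans_opt d P (Some \<theta>) Q \<longleftrightarrow> dtrans d P \<theta> Q"
  by (simp_all add: dtrans_opt_def)

lemma dtrans_opt_par_proj_keys:
  "dtrans_opt d P (par_proj D \<theta>) Q \<Longrightarrow> keys Q \<subseteq> insert (pkey \<theta>) (keys P)"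
  using dtrans_keys_subset pkey_par_proj by (cases "par_proj D \<theta>") fastforce+

lemma dtrans_Pa_par_proj: "dtrans d (Pa X Y) \<theta> Q \<Longrightarrow> \<exists>D. par_proj D \<theta> \<noteq> None"
  by (cases rule: dtrans_PaE) auto

lemma dtrans_Pa_components:
  assumes "dtrans d (Pa X Y) \<theta> Q"
  obtains X' Y' where "Q = Pa X' Y'"
    "dtrans_opt d X (par_proj DL \<theta>) X'" "dtrans_opt d Y (par_proj DR \<theta>) Y'"
  using assms by (cases rule: dtrans_PaE) auto

text \<open>Only the key side conditions of the parallel rules refer to an idle component.\<close>
lemma dtrans_Pa_reassemble:
  assumes "dtrans d (Pa X Y) \<theta> Q"
    and "dtrans_opt d X1 (par_proj DL \<theta>) X1'" "dtrans_opt d Y1 (par_proj DR \<theta>) Y1'"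
    and "keys X1 \<subseteq> insert k (keys X)" "keys Y1 \<subseteq> insert k (keys Y)" "k \<noteq> pkey \<theta>"
  shows "dtrans d (Pa X1 Y1) \<theta> (Pa X1' Y1')"
  using assms(1)
proof (cases rule: dtrans_PaE)
  case (left \<phi> X')
  then show ?thesis using assms(2-6) by (auto intro: dtrans_parL)
next
  case (right \<phi> Y')
  then show ?thesis using assms(2-6) by (auto intro: dtrans_parR)
next
  case (sync u1 l u2 k' X' Y')
  then show ?thesis using assms(2,3) by (auto intro: dtrans_syn)
qed

section \<open>Independent transitions commute\<close>

definition indep_diamond :: "'n proc \<Rightarrow> bool" where
  "indep_diamond P \<longleftrightarrow> (\<forall>d1 d2 \<theta> \<theta>' Q R. dtrans d1 P \<theta> Q \<longrightarrow> dtrans d2 P \<theta>' R \<longrightarrow> iota \<theta> \<theta>' \<longrightarrow>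
     (\<exists>S. dtrans d2 Q \<theta>' S \<and> dtrans d1 R \<theta> S))"

lemma indep_diamondI:
  "(\<And>d1 d2 \<theta> \<theta>' Q R. dtrans d1 P \<theta> Q \<Longrightarrow> dtrans d2 P \<theta>' R \<Longrightarrow> iota \<theta> \<theta>' \<Longrightarrow>
     \<exists>S. dtrans d2 Q \<theta>' S \<and> dtrans d1 R \<theta> S) \<Longrightarrow> indep_diamond P"
  unfolding indep_diamond_def by blast

lemma indep_diamondE:
  assumes "indep_diamond P" "dtrans d1 P \<theta> Q" "dtrans d2 P \<theta>' R" "iota \<theta> \<theta>'"
  obtains S where "dtrans d2 Q \<theta>' S" "dtrans d1 R \<theta> S"
  using assms unfolding indep_diamond_def by blast

lemma indep_diamond_opt:
  assumes "indep_diamond X" "dtrans_opt d1 X c X1" "dtrans_opt d2 X c' X2"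
    and "\<And>\<phi> \<phi>'. c = Some \<phi> \<Longrightarrow> c' = Some \<phi>' \<Longrightarrow> iota \<phi> \<phi>'"
  obtains S where "dtrans_opt d2 X1 c' S" "dtrans_opt d1 X2 c S"
  using assms by (cases c; cases c') (auto elim: indep_diamondE)

lemma indep_diamond_Pa:
  assumes "indep_diamond X" "indep_diamond Y"
  shows "indep_diamond (Pa X Y)"
proof (rule indep_diamondI)
  fix d1 d2 \<theta> \<theta>' Q R
  assume t: "dtrans d1 (Pa X Y) \<theta> Q" and u: "dtrans d2 (Pa X Y) \<theta>' R" and i: "iota \<theta> \<theta>'"
  obtain X1 Y1 where Q: "Q = Pa X1 Y1"
    and x1: "dtrans_opt d1 X (par_proj DL \<theta>) X1" and y1: "dtrans_opt d1 Y (par_proj DR \<theta>) Y1"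
    using t by (rule dtrans_Pa_components)
  obtain X2 Y2 where R: "R = Pa X2 Y2"
    and x2: "dtrans_opt d2 X (par_proj DL \<theta>') X2" and y2: "dtrans_opt d2 Y (par_proj DR \<theta>') Y2"
    using u by (rule dtrans_Pa_components)
  obtain SX where "dtrans_opt d2 X1 (par_proj DL \<theta>') SX" "dtrans_opt d1 X2 (par_proj DL \<theta>) SX"
    using assms(1) x1 x2 iota_par_proj[OF i] by (rule indep_diamond_opt)
  moreover obtain SY where "dtrans_opt d2 Y1 (par_proj DR \<theta>') SY" "dtrans_opt d1 Y2 (par_proj DR \<theta>) SY"
    using assms(2) y1 y2 iota_par_proj[OF i] by (rule indep_diamond_opt)
  moreover note keys = dtrans_opt_par_proj_keys[OF x1] dtrans_opt_par_proj_keys[OF y1]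
    dtrans_opt_par_proj_keys[OF x2] dtrans_opt_par_proj_keys[OF y2]
  moreover have "pkey \<theta> \<noteq> pkey \<theta>'" using i by (rule iota_pkey_neq)
  ultimately have "dtrans d2 Q \<theta>' (Pa SX SY)" "dtrans d1 R \<theta> (Pa SX SY)"
    unfolding Q R by (auto intro: dtrans_Pa_reassemble[OF u] dtrans_Pa_reassemble[OF t])
  then show "\<exists>S. dtrans d2 Q \<theta>' S \<and> dtrans d1 R \<theta> S" by blast
qed

lemma indep_diamond_Plus:
  assumes "indep_diamond X" "indep_diamond Y"
  shows "indep_diamond (Plus X Y)"
proof (rule indep_diamondI)
  fix d1 d2 \<theta> \<theta>' Q R
  assume t: "dtrans d1 (Plus X Y) \<theta> Q" and u: "dtrans d2 (Plus X Y) \<theta>' R" and i: "iota \<theta> \<theta>'"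
  from t show "\<exists>S. dtrans d2 Q \<theta>' S \<and> dtrans d1 R \<theta> S"
  proof (cases rule: dtrans_PlusE)
    case (left \<phi> X1)
    from u obtain \<phi>' X2 where "\<theta>' = pre (TSum DL) \<phi>'" "R = Plus X2 Y" "dtrans d2 X \<phi>' X2"
      using i left(1) by (cases rule: dtrans_PlusE) auto
    moreover from this obtain S where "dtrans d2 X1 \<phi>' S" "dtrans d1 X2 \<phi> S"
      using assms(1) left(3) i left(1) by (auto elim: indep_diamondE)
    ultimately show ?thesis using left by (auto intro: dtrans_sumL)
  next
    case (right \<phi> Y1)
    from u obtain \<phi>' Y2 where "\<theta>' = pre (TSum DR) \<phi>'" "R = Plus X Y2" "dtrans d2 Y \<phi>' Y2"
      using i right(1) by (cases rule: dtrans_PlusE) auto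
    moreover from this obtain S where "dtrans d2 Y1 \<phi>' S" "dtrans d1 Y2 \<phi> S"
      using assms(2) right(3) i right(1) by (auto elim: indep_diamondE)
    ultimately show ?thesis using right by (auto intro: dtrans_sumR)
  qed
qed

lemma indep_diamond_KPre:
  assumes "indep_diamond X"
  shows "indep_diamond (KPre a k X)"
proof (rule indep_diamondI)
  fix d1 d2 \<theta> \<theta>' Q R
  assume t: "dtrans d1 (KPre a k X) \<theta> Q" and u: "dtrans d2 (KPre a k X) \<theta>' R" and i: "iota \<theta> \<theta>'"
  from t obtain X1 where "Q = KPre a k X1" "dtrans d1 X \<theta> X1" "pkey \<theta> \<noteq> k"
    using i by (cases rule: dtrans_KPreE) (auto simp: not_iota_PA_Nil)
  moreover from u obtain X2 where "R = KPre a k X2" "dtrans d2 X \<theta>' X2" "pkey \<theta>' \<noteq> k"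
    using i by (cases rule: dtrans_KPreE) (auto simp: not_iota_PA_Nil)
  moreover from calculation obtain S where "dtrans d2 X1 \<theta>' S" "dtrans d1 X2 \<theta> S"
    using assms i by (auto elim: indep_diamondE)
  ultimately show "\<exists>S. dtrans d2 Q \<theta>' S \<and> dtrans d1 R \<theta> S" by (auto intro: dtrans_pref)
qed

lemma indep_diamond_Rs:
  assumes "indep_diamond X"
  shows "indep_diamond (Rs X l)"
proof (rule indep_diamondI)
  fix d1 d2 \<theta> \<theta>' Q R
  assume t: "dtrans d1 (Rs X l) \<theta> Q" and u: "dtrans d2 (Rs X l) \<theta>' R" and i: "iota \<theta> \<theta>'"
  from t obtain X1 where "Q = Rs X1 l" "dtrans d1 X \<theta> X1" "lab \<theta> \<notin> {Vis l, Vis (cobar l)}"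
    by (rule dtrans_RsE)
  moreover from u obtain X2 where "R = Rs X2 l" "dtrans d2 X \<theta>' X2" "lab \<theta>' \<notin> {Vis l, Vis (cobar l)}"
    by (rule dtrans_RsE)
  moreover from calculation obtain S where "dtrans d2 X1 \<theta>' S" "dtrans d1 X2 \<theta> S"
    using assms i by (auto elim: indep_diamondE)
  ultimately show "\<exists>S. dtrans d2 Q \<theta>' S \<and> dtrans d1 R \<theta> S" by (auto intro: dtrans_res)
qed

lemma indep_diamond_Pre: "indep_diamond (Pre a X)"
  by (rule indep_diamondI) (metis dtrans_PreD not_iota_PA_Nil(1))

lemma indep_diamond: "indep_diamond P"
  by (induction P) (auto intro: indep_diamondI indep_diamond_Pre indep_diamond_Rs
      indep_diamond_Plus indep_diamond_Pa indep_diamond_KPre)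

section \<open>Squares of key steps consist of independent transitions\<close>

definition key_square_indep :: "'n proc \<Rightarrow> bool" where
  "key_square_indep P \<longleftrightarrow> (\<forall>d1 d2 \<theta> \<theta>' Q R S. dtrans d1 P \<theta> Q \<longrightarrow> dtrans d2 P \<theta>' R \<longrightarrow>
     pkey \<theta> \<noteq> pkey \<theta>' \<longrightarrow> key_step Q (pkey \<theta>') S \<longrightarrow> key_step R (pkey \<theta>) S \<longrightarrow> iota \<theta> \<theta>')"

lemma key_square_indepI:
  "(\<And>d1 d2 \<theta> \<theta>' Q R S. dtrans d1 P \<theta> Q \<Longrightarrow> dtrans d2 P \<theta>' R \<Longrightarrow> pkey \<theta> \<noteq> pkey \<theta>' \<Longrightarrow>
     key_step Q (pkey \<theta>') S \<Longrightarrow> key_step R (pkey \<theta>) S \<Longrightarrow> iota \<theta> \<theta>') \<Longrightarrow> key_square_indep P"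
  unfolding key_square_indep_def by blast

lemma key_square_indepD:
  "key_square_indep P \<Longrightarrow> dtrans d1 P \<theta> Q \<Longrightarrow> dtrans d2 P \<theta>' R \<Longrightarrow> pkey \<theta> \<noteq> pkey \<theta>' \<Longrightarrow>
     key_step Q (pkey \<theta>') S \<Longrightarrow> key_step R (pkey \<theta>) S \<Longrightarrow> iota \<theta> \<theta>'"
  unfolding key_square_indep_def by blast

lemma key_square_indep_component:
  assumes "key_square_indep X" "dtrans d1 X \<phi> X1" "dtrans d2 X \<phi>' X2" "pkey \<phi> \<noteq> pkey \<phi>'"
    and "maybe_key_step b X1 (pkey \<phi>') S" "maybe_key_step c X2 (pkey \<phi>) S"
  shows "iota \<phi> \<phi>'"
proof -
  have "maybe_key_step True X (pkey \<phi>) X1" "maybe_key_step True X (pkey \<phi>') X2"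
    using assms(2,3) by (auto simp: maybe_key_step_def intro: key_stepI)
  with assms(4-6) have "b \<and> c" using maybe_key_step_square by metis
  then show ?thesis
    using assms by (auto simp: maybe_key_step_def intro: key_square_indepD)
qed

lemma key_square_indep_Pa:
  assumes "key_square_indep X" "key_square_indep Y"
  shows "key_square_indep (Pa X Y)"
proof (rule key_square_indepI)
  fix d1 d2 \<theta> \<theta>' Q R S
  assume t: "dtrans d1 (Pa X Y) \<theta> Q" and u: "dtrans d2 (Pa X Y) \<theta>' R" and k: "pkey \<theta> \<noteq> pkey \<theta>'"
    and q: "key_step Q (pkey \<theta>') S" and r: "key_step R (pkey \<theta>) S"
  obtain X1 Y1 where Q: "Q = Pa X1 Y1"
    and x1: "dtrans_opt d1 X (par_proj DL \<theta>) X1" and y1: "dtrans_opt d1 Y (par_proj DR \<theta>) Y1"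
    using t by (rule dtrans_Pa_components)
  obtain X2 Y2 where R: "R = Pa X2 Y2"
    and x2: "dtrans_opt d2 X (par_proj DL \<theta>') X2" and y2: "dtrans_opt d2 Y (par_proj DR \<theta>') Y2"
    using u by (rule dtrans_Pa_components)
  obtain SX SY bX bY where S: "S = Pa SX SY"
    and sx1: "maybe_key_step bX X1 (pkey \<theta>') SX" and sy1: "maybe_key_step bY Y1 (pkey \<theta>') SY"
    using q unfolding Q by (rule key_step_Pa_components)
  obtain cX cY where sx2: "maybe_key_step cX X2 (pkey \<theta>) SX"
    and sy2: "maybe_key_step cY Y2 (pkey \<theta>) SY"
    using r unfolding R S by (rule key_step_Pa_components) auto
  show "iota \<theta> \<theta>'"
  proof (rule iota_par_projI[OF dtrans_Pa_par_proj[OF t] dtrans_Pa_par_proj[OF u] k])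
    fix D \<phi> \<phi>' assume p: "par_proj D \<theta> = Some \<phi>" "par_proj D \<theta>' = Some \<phi>'"
    then have keys: "pkey \<phi> = pkey \<theta>" "pkey \<phi>' = pkey \<theta>'" by (simp_all add: pkey_par_proj)
    show "iota \<phi> \<phi>'"
    proof (cases D)
      case DL
      then show ?thesis
        using key_square_indep_component[OF assms(1), of d1 \<phi> X1 d2 \<phi>' X2 bX SX cX]
          x1 x2 sx1 sx2 p keys k by simp
    next
      case DR
      then show ?thesis
        using key_square_indep_component[OF assms(2), of d1 \<phi> Y1 d2 \<phi>' Y2 bY SY cY]
          y1 y2 sy1 sy2 p keys k by simp
    qed
  qed
qed

text \<open>After the left step the left summand holds a key, so the closing step from \<open>Q\<close> stays on
  the left, and symmetrically the one from \<open>R\<close> stays on the right. Then \<open>X1\<close> would return to \<open>X\<close>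
  by a step with the other key.\<close>
lemma no_key_square_Plus_left_right:
  assumes t: "dtrans d1 (Plus X Y) (pre (TSum DL) \<phi>) Q"
    and u: "dtrans d2 (Plus X Y) (pre (TSum DR) \<phi>') R"
    and k: "pkey \<phi> \<noteq> pkey \<phi>'" and q: "key_step Q (pkey \<phi>') S" and r: "key_step R (pkey \<phi>) S"
  shows False
proof -
  from t obtain X1 where Q: "Q = Plus X1 Y" and x1: "dtrans d1 X \<phi> X1" and "keys Y = {}"
    by (cases rule: dtrans_PlusE) auto
  from u obtain Y2 where R: "R = Plus X Y2" and y2: "dtrans d2 Y \<phi>' Y2" and "keys X = {}"
    by (cases rule: dtrans_PlusE) auto
  have "pkey \<phi> \<in> keys X1" "pkey \<phi>' \<in> keys Y2"
    using dtrans_keys_change[OF x1] dtrans_keys_change[OF y2] \<open>keys X = {}\<close> \<open>keys Y = {}\<close> by blast+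
  then obtain S1 S2 where "S = Plus S1 Y" "key_step X1 (pkey \<phi>') S1" "S = Plus X S2"
    using q r unfolding Q R by (elim key_step_PlusE) auto
  then have "key_step X1 (pkey \<phi>') X" by simp
  then show False
    using key_step_keys_change[of X1 "pkey \<phi>'" X "pkey \<phi>"] \<open>pkey \<phi> \<in> keys X1\<close> \<open>keys X = {}\<close> k
    by auto
qed

lemma key_square_indep_Plus:
  assumes "key_square_indep X" "key_square_indep Y"
  shows "key_square_indep (Plus X Y)"
proof (rule key_square_indepI)
  fix d1 d2 \<theta> \<theta>' Q R S
  assume t: "dtrans d1 (Plus X Y) \<theta> Q" and u: "dtrans d2 (Plus X Y) \<theta>' R" and k: "pkey \<theta> \<noteq> pkey \<theta>'"
    and q: "key_step Q (pkey \<theta>') S" and r: "key_step R (pkey \<theta>) S"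
  from t show "iota \<theta> \<theta>'"
  proof (cases rule: dtrans_PlusE)
    case tL: (left \<phi> X1)
    from u show ?thesis
    proof (cases rule: dtrans_PlusE)
      case uL: (left \<phi>' X2)
      obtain SX SY b c where "S = Plus SX SY" "maybe_key_step b X1 (pkey \<theta>') SX"
        "maybe_key_step c X2 (pkey \<theta>) SX"
        using q r unfolding tL(2) uL(2) by (elim key_step_Plus_components) auto
      then show ?thesis
        using key_square_indep_component[OF assms(1) tL(3) uL(3)] k tL(1) uL(1) by auto
    next
      case uR: (right \<phi>' Y2)
      then show ?thesis using no_key_square_Plus_left_right t u k q r tL by simp
    qed
  next
    case tR: (right \<phi> Y1)
    from u show ?thesis
    proof (cases rule: dtrans_PlusE)
      case uL: (left \<phi>' X2)
      then show ?thesis using no_key_square_Plus_left_right t u k q r tR by (metis pkey_pre)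
    next
      case uR: (right \<phi>' Y2)
      obtain SX SY b c where "S = Plus SX SY" "maybe_key_step b Y1 (pkey \<theta>') SY"
        "maybe_key_step c Y2 (pkey \<theta>) SY"
        using q r unfolding tR(2) uR(2) by (elim key_step_Plus_components) auto
      then show ?thesis
        using key_square_indep_component[OF assms(2) tR(3) uR(3)] k tR(1) uR(1) by auto
    qed
  qed
qed

lemma key_square_indep_KPre:
  assumes "key_square_indep X"
  shows "key_square_indep (KPre a k X)"
proof (rule key_square_indepI)
  fix d1 d2 \<theta> \<theta>' Q R S
  assume t: "dtrans d1 (KPre a k X) \<theta> Q" and u: "dtrans d2 (KPre a k X) \<theta>' R"
    and k: "pkey \<theta> \<noteq> pkey \<theta>'" and q: "key_step Q (pkey \<theta>') S" and r: "key_step R (pkey \<theta>) S"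
  from t show "iota \<theta> \<theta>'"
  proof (cases rule: dtrans_KPreE)
    case tI: (inner X1)
    from u show ?thesis
    proof (cases rule: dtrans_KPreE)
      case uI: (inner X2)
      from q r obtain S1 where "key_step X1 (pkey \<theta>') S1" "key_step X2 (pkey \<theta>) S1"
        unfolding tI(1) uI(1) using tI(3) uI(3) by (elim key_step_KPreE) auto
      then show ?thesis using key_square_indepD[OF assms tI(2) uI(2) k] by blast
    next
      case undo
      with r have "S = KPre a (pkey \<theta>) X" by (simp add: key_step_PreD)
      with q tI undo show ?thesis by (auto elim: key_step_KPreE)
    qed
  next
    case tU: undo
    with q have S: "S = KPre a (pkey \<theta>') X" by (simp add: key_step_PreD)
    from u show ?thesis
    proof (cases rule: dtrans_KPreE)
      case (inner X2)
      with r S tU show ?thesis by (auto elim: key_step_KPreE)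
    next
      case undo
      with tU k show ?thesis by simp
    qed
  qed
qed

lemma key_square_indep_Rs:
  assumes "key_square_indep X"
  shows "key_square_indep (Rs X l)"
proof (rule key_square_indepI)
  fix d1 d2 \<theta> \<theta>' Q R S
  assume t: "dtrans d1 (Rs X l) \<theta> Q" and u: "dtrans d2 (Rs X l) \<theta>' R"
    and k: "pkey \<theta> \<noteq> pkey \<theta>'" and q: "key_step Q (pkey \<theta>') S" and r: "key_step R (pkey \<theta>) S"
  from t obtain X1 where "Q = Rs X1 l" "dtrans d1 X \<theta> X1" by (rule dtrans_RsE)
  moreover from u obtain X2 where "R = Rs X2 l" "dtrans d2 X \<theta>' X2" by (rule dtrans_RsE)
  moreover from calculation q r obtain S1 where "key_step X1 (pkey \<theta>') S1" "key_step X2 (pkey \<theta>) S1"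
    by (auto elim!: key_step_RsE)
  ultimately show "iota \<theta> \<theta>'" using assms k by (auto intro: key_square_indepD)
qed

lemma key_square_indep_Pre: "key_square_indep (Pre a X)"
proof (rule key_square_indepI)
  fix d1 d2 \<theta> \<theta>' Q R S
  assume "dtrans d1 (Pre a X) \<theta> Q" "dtrans d2 (Pre a X) \<theta>' R" "pkey \<theta> \<noteq> pkey \<theta>'"
    and "key_step Q (pkey \<theta>') S" "key_step R (pkey \<theta>) S"
  then show "iota \<theta> \<theta>'" by (auto dest!: dtrans_PreD elim!: key_step_KPreE)
qed

lemma key_square_indep: "key_square_indep P"
  by (induction P) (auto intro: key_square_indepI key_square_indep_Pre key_square_indep_Rs
      key_square_indep_Plus key_square_indep_Pa key_square_indep_KPre)

lemma hat_iff_dtrans: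
  "hat t \<theta> \<longleftrightarrow> lab \<theta> = clab t \<and> pkey \<theta> = ckey t \<and> dtrans (dirn t) (src t) \<theta> (tgt t)"
  unfolding hat_def by (cases "dirn t") auto

lemma step_if_dtrans: "dtrans d P \<theta> Q \<Longrightarrow> step P Q"
  unfolding step_def by (cases d) auto

lemma reachable_dtrans: "reachable P \<Longrightarrow> dtrans d P \<theta> Q \<Longrightarrow> reachable Q"
  unfolding reachable_def by (meson rtranclp.rtrancl_into_rtrancl step_if_dtrans)

lemma is_ctrans_CT:
  "reachable P \<Longrightarrow> dtrans d P \<theta> Q \<Longrightarrow> is_ctrans (CT P d (lab \<theta>) (pkey \<theta>) Q)"
  unfolding is_ctrans_def hat_iff_dtrans by auto

lemma key_step_if_is_ctrans: "is_ctrans (CT P d a k Q) \<Longrightarrow> key_step P k Q"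
  unfolding is_ctrans_def hat_iff_dtrans key_step_def by auto

lemma ctrans_indep_if_direct_key_indep:
  assumes "is_ctrans t" "is_ctrans u" "coinitial t u" "direct_key_indep t u"
  shows "ctrans_indep t u"
proof -
  obtain S where "key_step (tgt t) (ckey u) S" "key_step (tgt u) (ckey t) S" "ckey t \<noteq> ckey u"
    using assms(4) unfolding direct_key_indep_def by (blast intro: key_step_if_is_ctrans)
  moreover obtain \<theta> \<theta>' where t: "hat t \<theta>" and u: "hat u \<theta>'"
    using assms(1,2) unfolding is_ctrans_def by blast
  moreover have "src u = src t" using assms(3) unfolding coinitial_def by simp
  ultimately have "iota \<theta> \<theta>'" and "step (src t) (tgt u)"
    unfolding hat_iff_dtrans by (metis key_square_indepD[OF key_square_indep], metis step_if_dtrans)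
  then show ?thesis using t u unfolding ctrans_indep_def connected_def by blast
qed

lemma direct_key_indep_if_ctrans_indep:
  assumes "is_ctrans t" "coinitial t u" "ctrans_indep t u"
  shows "direct_key_indep t u"
proof -
  obtain \<theta> \<theta>' where t: "hat t \<theta>" and u: "hat u \<theta>'" and i: "iota \<theta> \<theta>'"
    using assms(3) unfolding ctrans_indep_def by blast
  have "src u = src t" using assms(2) unfolding coinitial_def by simp
  with t u obtain S where "dtrans (dirn u) (tgt t) \<theta>' S" "dtrans (dirn t) (tgt u) \<theta> S"
    unfolding hat_iff_dtrans by (metis indep_diamondE[OF indep_diamond _ _ i])
  moreover have "reachable (tgt t)" "reachable (tgt u)"
    using assms(1) t u \<open>src u = src t\<close> unfolding is_ctrans_def hat_iff_dtrans
    by (auto intro: reachable_dtrans)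
  ultimately show ?thesis
    using t u iota_pkey_neq[OF i] unfolding direct_key_indep_def hat_iff_dtrans
    by (metis is_ctrans_CT)
qed

theorem lemma6p11:
  fixes t u :: "'n ctrans"
  assumes "is_ctrans t" and "is_ctrans u" and "coinitial t u"
  shows "direct_key_indep t u \<longleftrightarrow> ctrans_indep t u"
  using assms ctrans_indep_if_direct_key_indep direct_key_indep_if_ctrans_indep by blast

end
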